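(* Let $\Gamma$ be a group, $S$ a $\Gamma$-graded semigroup with local units, and $S_\Gamma$ the corresponding stable graded Rees matrix semigroup. Then: (1) $E(S_\Gamma)=\{e_{\alpha\alpha}(u):u\in E(S),\alpha\in\Gamma\}$; (2) $S_\Gamma$ has local units; (3) $S_\Gamma$ is strongly graded; (4) the map $\phi:S\#\Gamma\to(S_\Gamma)_\varepsilon$ with $\phi(sP_\alpha)=e_{\deg(s)\alpha,\alpha}(s)$ for $sP_\alpha\neq0$ and $\phi(0)=0$ is a semigroup isomorphism; (5) $S$ is an inverse semigroup if and only if $S_\Gamma$ is an inverse semigroup.
   Context: Semigroups have a zero; $S$ is $\Gamma$-graded via $\deg:S\setminus\{0\}\to\Gamma$ with $\deg(st)=\deg(s)\deg(t)$ whenever $st\neq0$; $S_\alpha=\deg^{-1}(\alpha)\cup\{0\}$; strongly graded means $S_\alpha S_\beta=S_{\alpha\beta}$; local units: each $s$ has idempotents $u,v$ with $us=s=sv$; $E(\cdot)$ denotes idempotents. $S_\Gamma=\{e_{\alpha\beta}(s):\alpha,\beta\in\Gamma,s\in S\}$, where all $e_{\alpha\beta}(0)$ are identified with a single zero $0$, with multiplication $e_{\alpha\beta}(s)e_{\delta\gamma}(t)=e_{\alpha\gamma}(st)$ if $\beta=\delta$ and $0$ otherwise, and $\Gamma$-grading $\deg(e_{\alpha\beta}(s))=\alpha^{-1}\deg(s)\beta$ for nonzero elements. The smash product $S\#\Gamma=\{sP_\alpha:s\in S\setminus\{0\},\alpha\in\Gamma\}\cup\{0\}$ has product $(sP_\alpha)(tP_\beta)=stP_\beta$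 if $st\neq0$ and $t\in S_{\alpha\beta^{-1}}$, else $0$. *)

theory Defs
  imports Main
begin

text \<open>The group \<Gamma> is written additively
 (class group_add, not necessarily commutative): identity 0, product +,
 inverse uminus.\<close>

definition idempotents :: "'s set \<Rightarrow> ('s \<Rightarrow> 's \<Rightarrow> 's) \<Rightarrow> 's set" where
  "idempotents C m = {x \<in> C. m x x = x}"

definition has_local_units :: "'s set \<Rightarrow> ('s \<Rightarrow> 's \<Rightarrow> 's) \<Rightarrow> bool" where
  "has_local_units C m \<longleftrightarrow>
     (\<forall>s\<in>C. \<exists>u\<in>idempotents C m. \<exists>v\<in>idempotents C m. m u s = s \<and> m s v = s)"

definition is_graded :: "'s set \<Rightarrow> ('s \<Rightarrow> 's \<Rightarrow> 's) \<Rightarrow> 's \<Rightarrow> ('s \<Rightarrow> 'g::group_add) \<Rightarrow> bool" where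
  "is_graded C m z deg \<longleftrightarrow>
     (\<forall>s\<in>C. \<forall>t\<in>C. s \<noteq> z \<longrightarrow> t \<noteq> z \<longrightarrow> m s t \<noteq> z \<longrightarrow> deg (m s t) = deg s + deg t)"

definition component :: "'s set \<Rightarrow> 's \<Rightarrow> ('s \<Rightarrow> 'g) \<Rightarrow> 'g \<Rightarrow> 's set" where
  "component C z deg \<alpha> = {s \<in> C. s \<noteq> z \<and> deg s = \<alpha>} \<union> {z}"

definition set_prod :: "('s \<Rightarrow> 's \<Rightarrow> 's) \<Rightarrow> 's set \<Rightarrow> 's set \<Rightarrow> 's set" where
  "set_prod m A B = {m a b | a b. a \<in> A \<and> b \<in> B}"

definition strongly_graded :: "'s set \<Rightarrow> ('s \<Rightarrow> 's \<Rightarrow> 's) \<Rightarrow> 's \<Rightarrow> ('s \<Rightarrow> 'g::group_add) \<Rightarrow> bool" where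
  "strongly_graded C m z deg \<longleftrightarrow>
     (\<forall>\<alpha> \<beta>. set_prod m (component C z deg \<alpha>) (component C z deg \<beta>)
              = component C z deg (\<alpha> + \<beta>))"

definition inverse_semigroup :: "'s set \<Rightarrow> ('s \<Rightarrow> 's \<Rightarrow> 's) \<Rightarrow> bool" where
  "inverse_semigroup C m \<longleftrightarrow>
     (\<forall>s\<in>C. \<exists>!t. t \<in> C \<and> m (m s t) s = s \<and> m (m t s) t = t)"

definition semigroup_iso :: "('s \<Rightarrow> 't) \<Rightarrow> 's set \<Rightarrow> ('s \<Rightarrow> 's \<Rightarrow> 's) \<Rightarrow> 't set \<Rightarrow> ('t \<Rightarrow> 't \<Rightarrow> 't) \<Rightarrow> bool" where
  "semigroup_iso f C m D n \<longleftrightarrow>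
     bij_betw f C D \<and> (\<forall>x\<in>C. \<forall>y\<in>C. f (m x y) = n (f x) (f y))"

datatype ('g, 'a) rees = RZero | RE 'g 'g 'a

text \<open>e_{alpha beta}(s), with all e_{alpha beta}(0) identified with the zero.\<close>
definition ee :: "'g \<Rightarrow> 'g \<Rightarrow> 'a::zero \<Rightarrow> ('g, 'a) rees" where
  "ee \<alpha> \<beta> s = (if s = 0 then RZero else RE \<alpha> \<beta> s)"

definition rees_carrier :: "('g, 'a::zero) rees set" where
  "rees_carrier = {RZero} \<union> {RE \<alpha> \<beta> s | \<alpha> \<beta> s. s \<noteq> 0}"

fun rees_mult :: "('g, 'a::{semigroup_mult,mult_zero}) rees \<Rightarrow> ('g, 'a) rees \<Rightarrow> ('g, 'a) rees" where
  "rees_mult (RE \<alpha> \<beta> s) (RE \<delta> \<gamma> t) = (if \<beta> = \<delta> then ee \<alpha> \<gamma> (s * t) else RZero)"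
| "rees_mult _ _ = RZero"

fun rees_deg :: "('a \<Rightarrow> 'g::group_add) \<Rightarrow> ('g, 'a) rees \<Rightarrow> 'g" where
  "rees_deg deg (RE \<alpha> \<beta> s) = - \<alpha> + deg s + \<beta>"
| "rees_deg deg RZero = 0"

datatype ('a, 'g) smash = SZero | SP 'a 'g

definition smash_carrier :: "('a::zero, 'g) smash set" where
  "smash_carrier = {SZero} \<union> {SP s \<alpha> | s \<alpha>. s \<noteq> 0}"

fun smash_mult :: "('a \<Rightarrow> 'g::group_add) \<Rightarrow> ('a::{semigroup_mult,mult_zero}, 'g) smash
                    \<Rightarrow> ('a, 'g) smash \<Rightarrow> ('a, 'g) smash" where
  "smash_mult deg (SP s \<alpha>) (SP t \<beta>) =
     (if s * t \<noteq> 0 \<and> t \<noteq> 0 \<and> deg t = \<alpha> + - \<beta> then SP (s * t) \<beta> else SZero)"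
| "smash_mult deg _ _ = SZero"

fun phi :: "('a \<Rightarrow> 'g::group_add) \<Rightarrow> ('a, 'g) smash \<Rightarrow> ('g, 'a) rees" where
  "phi deg (SP s \<alpha>) = RE (deg s + \<alpha>) \<alpha> s"
| "phi deg SZero = RZero"

end

theory Submission
  imports Defs
begin

(* Everything is computed with the matrix-unit rule e_{a,b}(s) e_{b,c}(t) = e_{a,c}(st).
   An idempotent must be diagonal with idempotent entry, and local units u, v of s give the
   local units e_{a,a}(u), e_{b,b}(v) of e_{a,b}(s).  Nonzero idempotents of S have degree 0,
   so with a left unit u of s the factorisation e_{a,d}(s) = e_{a,a+g}(u) e_{a+g,d}(s) splits
   the degree of e_{a,d}(s) at any prescribed g: this is strong grading.  Since e_{a,b}(s)
   has degree 0 iff a = deg s + b, phi is a bijection onto the degree-0 component, and the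
   condition t in S_{a-b} of the smash product is exactly the matching of inner indices.
   Finally, the inverses of e_{a,b}(s) are precisely the e_{b,a}(r) with r an inverse of s,
   so uniqueness of inverses transfers in both directions. *)

lemma ee_0 [simp]: "ee \<alpha> \<beta> 0 = RZero"
  by (simp add: ee_def)

lemma ee_nonzero [simp]: "s \<noteq> 0 \<Longrightarrow> ee \<alpha> \<beta> s = RE \<alpha> \<beta> s"
  by (simp add: ee_def)

lemma rees_mult_RZero_right [simp]: "rees_mult x RZero = RZero"
  by (cases x) auto

lemma RZero_in_rees_carrier [simp]: "RZero \<in> rees_carrier"
  by (simp add: rees_carrier_def)

lemma RE_in_rees_carrier_iff [simp]: "RE \<alpha> \<beta> s \<in> rees_carrier \<longleftrightarrow> s \<noteq> 0"
  by (simp add: rees_carrier_def)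

lemma rees_mult_in_rees_carrier [simp]: "rees_mult x y \<in> rees_carrier"
  by (cases x; cases y) (auto simp: ee_def)

lemma RZero_in_component [simp]: "RZero \<in> component rees_carrier RZero deg \<gamma>"
  by (simp add: component_def)

lemma RE_in_component_iff [simp]:
  "RE \<alpha> \<beta> s \<in> component rees_carrier RZero (rees_deg deg) \<gamma>
     \<longleftrightarrow> s \<noteq> 0 \<and> - \<alpha> + deg s + \<beta> = \<gamma>"
  by (auto simp: component_def)

lemma idempotents_rees:
  "idempotents (rees_carrier :: ('g, 'a::{semigroup_mult,mult_zero}) rees set) rees_mult
     = {ee \<alpha> \<alpha> u | u \<alpha>. u \<in> idempotents (UNIV :: 'a set) (*)}"
proof (intro set_eqI iffI)
  fix x :: "('g, 'a) rees"
  assume x: "x \<in> idempotents rees_carrier rees_mult"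
  show "x \<in> {ee \<alpha> \<alpha> u | u \<alpha>. u \<in> idempotents UNIV (*)}"
  proof (cases x)
    case RZero
    then have "x = ee undefined undefined 0" by simp
    moreover have "0 \<in> idempotents (UNIV :: 'a set) (*)" by (simp add: idempotents_def)
    ultimately show ?thesis by blast
  next
    case (RE \<alpha> \<beta> s)
    with x have "s \<noteq> 0" "\<alpha> = \<beta>" "s * s = s"
      by (auto simp: idempotents_def ee_def split: if_splits)
    with RE show ?thesis by (force simp: idempotents_def)
  qed
next
  fix x :: "('g, 'a) rees"
  assume "x \<in> {ee \<alpha> \<alpha> u | u \<alpha>. u \<in> idempotents UNIV (*)}"
  then obtain u \<alpha> where "x = ee \<alpha> \<alpha> u" "u * u = u" by (auto simp: idempotents_def)
  then show "x \<in> idempotents rees_carrier rees_mult"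
    by (cases "u = 0") (auto simp: idempotents_def)
qed

lemma has_local_units_rees:
  assumes "has_local_units (UNIV :: 'a::{semigroup_mult,mult_zero} set) (*)"
  shows "has_local_units (rees_carrier :: ('g, 'a) rees set) rees_mult"
  unfolding has_local_units_def
proof
  fix x :: "('g, 'a) rees"
  assume x: "x \<in> rees_carrier"
  show "\<exists>e\<in>idempotents rees_carrier rees_mult. \<exists>f\<in>idempotents rees_carrier rees_mult.
          rees_mult e x = x \<and> rees_mult x f = x"
  proof (cases x)
    case RZero
    have "RZero \<in> idempotents rees_carrier rees_mult" by (simp add: idempotents_def)
    with RZero show ?thesis by auto
  next
    case (RE \<alpha> \<beta> s)
    with x have "s \<noteq> 0" by simp
    from assms obtain u v where "u * u = u" "v * v = v" "u * s = s" "s * v = s"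
      unfolding has_local_units_def idempotents_def by blast
    with \<open>s \<noteq> 0\<close> have "u \<noteq> 0" "v \<noteq> 0" by auto
    with RE \<open>s \<noteq> 0\<close> \<open>u * u = u\<close> \<open>v * v = v\<close> \<open>u * s = s\<close> \<open>s * v = s\<close>
    have "RE \<alpha> \<alpha> u \<in> idempotents rees_carrier rees_mult"
      "RE \<beta> \<beta> v \<in> idempotents rees_carrier rees_mult"
      "rees_mult (RE \<alpha> \<alpha> u) x = x" "rees_mult x (RE \<beta> \<beta> v) = x"
      by (auto simp: idempotents_def)
    then show ?thesis by blast
  qed
qed

lemma graded_idempotent_deg_eq_0:
  fixes deg :: "'s \<Rightarrow> 'g::group_add"
  assumes "is_graded C m z deg" and "u \<in> C" and "m u u = u" and "u \<noteq> z"
  shows "deg u = 0"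
proof -
  have "deg u + deg u = deg u + 0"
    using assms unfolding is_graded_def by (metis add_0_right)
  then show ?thesis by (rule add_left_imp_eq)
qed

lemma is_graded_rees:
  fixes deg :: "'a::{semigroup_mult,mult_zero} \<Rightarrow> 'g::group_add"
  assumes "is_graded UNIV (*) 0 deg"
  shows "is_graded (rees_carrier :: ('g, 'a) rees set) rees_mult RZero (rees_deg deg)"
  unfolding is_graded_def
proof (intro ballI impI)
  fix x y :: "('g, 'a) rees"
  assume "x \<noteq> RZero" "y \<noteq> RZero" "rees_mult x y \<noteq> RZero"
  then obtain \<alpha> \<beta> s \<delta> t where xy: "x = RE \<alpha> \<beta> s" "y = RE \<beta> \<delta> t" and "s * t \<noteq> 0"
    by (cases x; cases y) (auto simp: ee_def split: if_splits)
  then have "deg (s * t) = deg s + deg t"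
    using assms unfolding is_graded_def by (metis UNIV_I mult_zero_left mult_zero_right)
  with xy \<open>s * t \<noteq> 0\<close> show "rees_deg deg (rees_mult x y) = rees_deg deg x + rees_deg deg y"
    by (simp add: add.assoc)
qed

lemma set_prod_memI: "a \<in> A \<Longrightarrow> b \<in> B \<Longrightarrow> m a b \<in> set_prod m A B"
  by (auto simp: set_prod_def)

lemma graded_set_prod_component_subset:
  assumes "is_graded C m z deg"
    and "z \<in> C"
    and closed: "\<And>x y. x \<in> C \<Longrightarrow> y \<in> C \<Longrightarrow> m x y \<in> C"
    and zero: "\<And>x. x \<in> C \<Longrightarrow> m z x = z \<and> m x z = z"
  shows "set_prod m (component C z deg \<alpha>) (component C z deg \<beta>) \<subseteq> component C z deg (\<alpha> + \<beta>)"
proof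
  fix x
  assume "x \<in> set_prod m (component C z deg \<alpha>) (component C z deg \<beta>)"
  then obtain a b where x: "x = m a b"
    and a: "a \<in> component C z deg \<alpha>" and b: "b \<in> component C z deg \<beta>"
    by (auto simp: set_prod_def)
  show "x \<in> component C z deg (\<alpha> + \<beta>)"
  proof (cases "x = z")
    case False
    with x a b zero \<open>z \<in> C\<close> have "a \<noteq> z" "b \<noteq> z" by (auto simp: component_def)
    with x a b False assms(1) closed show ?thesis
      by (auto simp: component_def is_graded_def)
  qed (simp add: component_def)
qed

lemma component_subset_set_prod_rees:
  fixes deg :: "'a::{semigroup_mult,mult_zero} \<Rightarrow> 'g::group_add"
  assumes graded: "is_graded UNIV (*) 0 deg"
    and lu: "has_local_units (UNIV :: 'a set) (*)"
  shows "component rees_carrier RZero (rees_deg deg) (\<gamma> + \<gamma>')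
           \<subseteq> set_prod rees_mult (component rees_carrier RZero (rees_deg deg) \<gamma>)
                (component rees_carrier RZero (rees_deg deg) \<gamma>')"
proof
  fix x :: "('g, 'a) rees"
  assume x: "x \<in> component rees_carrier RZero (rees_deg deg) (\<gamma> + \<gamma>')"
  show "x \<in> set_prod rees_mult (component rees_carrier RZero (rees_deg deg) \<gamma>)
             (component rees_carrier RZero (rees_deg deg) \<gamma>')"
  proof (cases x)
    case RZero
    then have "x = rees_mult RZero RZero" by simp
    then show ?thesis by (simp only: set_prod_memI RZero_in_component)
  next
    case (RE \<alpha> \<delta> s)
    with x have "s \<noteq> 0" and deg_x: "- \<alpha> + deg s + \<delta> = \<gamma> + \<gamma>'" by simp_all
    from lu obtain u where "u * u = u" "u * s = s"
      unfolding has_local_units_def idempotents_def by blast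
    with \<open>s \<noteq> 0\<close> have "u \<noteq> 0" by auto
    with graded UNIV_I \<open>u * u = u\<close> have "deg u = 0" by (rule graded_idempotent_deg_eq_0)
    have "- (\<alpha> + \<gamma>) + deg s + \<delta> = - \<gamma> + (- \<alpha> + deg s + \<delta>)"
      by (simp only: minus_add add.assoc)
    also have "\<dots> = \<gamma>'" by (simp add: deg_x add.assoc[symmetric])
    finally have "RE \<alpha> (\<alpha> + \<gamma>) u \<in> component rees_carrier RZero (rees_deg deg) \<gamma>"
      "RE (\<alpha> + \<gamma>) \<delta> s \<in> component rees_carrier RZero (rees_deg deg) \<gamma>'"
      using \<open>u \<noteq> 0\<close> \<open>s \<noteq> 0\<close> \<open>deg u = 0\<close> by (simp_all add: add.assoc[symmetric])
    moreover have "x = rees_mult (RE \<alpha> (\<alpha> + \<gamma>) u) (RE (\<alpha> + \<gamma>) \<delta> s)"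
      using RE \<open>u * s = s\<close> \<open>s \<noteq> 0\<close> by simp
    ultimately show ?thesis by (simp only: set_prod_memI)
  qed
qed

lemma strongly_graded_rees:
  fixes deg :: "'a::{semigroup_mult,mult_zero} \<Rightarrow> 'g::group_add"
  assumes "is_graded UNIV (*) 0 deg" and "has_local_units (UNIV :: 'a set) (*)"
  shows "strongly_graded (rees_carrier :: ('g, 'a) rees set) rees_mult RZero (rees_deg deg)"
  unfolding strongly_graded_def
proof (intro allI equalityI)
  fix \<gamma> \<gamma>' :: 'g
  show "set_prod rees_mult (component rees_carrier RZero (rees_deg deg) \<gamma>)
               (component rees_carrier RZero (rees_deg deg) \<gamma>')
             \<subseteq> component rees_carrier RZero (rees_deg deg) (\<gamma> + \<gamma>')"
    by (rule graded_set_prod_component_subset[OF is_graded_rees[OF assms(1)]]) simp_all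
  show "component rees_carrier RZero (rees_deg deg) (\<gamma> + \<gamma>')
          \<subseteq> set_prod rees_mult (component rees_carrier RZero (rees_deg deg) \<gamma>)
               (component rees_carrier RZero (rees_deg deg) \<gamma>')"
    by (rule component_subset_set_prod_rees[OF assms])
qed

lemma neg_add_add_eq_0_iff: "- \<alpha> + g + \<beta> = 0 \<longleftrightarrow> \<alpha> = g + (\<beta> :: 'g::group_add)"
  by (metis add.assoc add_minus_cancel add_0_right)

lemma bij_betw_phi:
  "bij_betw (phi deg) smash_carrier (component rees_carrier RZero (rees_deg deg) 0)"
proof (rule bij_betw_imageI)
  show "inj_on (phi deg) smash_carrier"
  proof (rule inj_onI)
    fix x y
    assume "phi deg x = phi deg y"
    then show "x = y" by (cases x; cases y) auto
  qed
  show "phi deg ` smash_carrier = component rees_carrier RZero (rees_deg deg) 0"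
  proof (intro equalityI subsetI)
    fix y
    assume "y \<in> phi deg ` smash_carrier"
    then show "y \<in> component rees_carrier RZero (rees_deg deg) 0"
      by (auto simp: smash_carrier_def neg_add_add_eq_0_iff)
  next
    fix y
    assume y: "y \<in> component rees_carrier RZero (rees_deg deg) 0"
    show "y \<in> phi deg ` smash_carrier"
    proof (cases y)
      case RZero
      then have "y = phi deg SZero" by simp
      then show ?thesis by (auto simp: smash_carrier_def)
    next
      case (RE \<alpha> \<beta> s)
      with y have "s \<noteq> 0" "y = phi deg (SP s \<beta>)"
        by (auto simp: neg_add_add_eq_0_iff)
      moreover from \<open>s \<noteq> 0\<close> have "SP s \<beta> \<in> smash_carrier" by (simp add: smash_carrier_def)
      ultimately show ?thesis by blast
    qed
  qed
qed

lemma phi_smash_mult: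
  fixes deg :: "'a::{semigroup_mult,mult_zero} \<Rightarrow> 'g::group_add"
  assumes graded: "is_graded UNIV (*) 0 deg"
    and "x \<in> smash_carrier" and "y \<in> smash_carrier"
  shows "phi deg (smash_mult deg x y) = rees_mult (phi deg x) (phi deg y)"
proof (cases x; cases y)
  fix s \<alpha> t \<beta>
  assume xy: "x = SP s \<alpha>" "y = SP t \<beta>"
  with assms have "t \<noteq> 0" by (simp add: smash_carrier_def)
  have match: "deg t = \<alpha> + - \<beta> \<longleftrightarrow> \<alpha> = deg t + \<beta>"
    by (metis diff_conv_add_uminus eq_diff_eq)
  show ?thesis
  proof (cases "s * t = 0")
    case False
    with graded \<open>t \<noteq> 0\<close> have "deg (s * t) = deg s + deg t"
      unfolding is_graded_def by (metis UNIV_I mult_zero_left)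
    with xy False \<open>t \<noteq> 0\<close> match show ?thesis by (auto simp: add.assoc)
  qed (use xy in auto)
qed auto

lemma semigroup_iso_phi:
  fixes deg :: "'a::{semigroup_mult,mult_zero} \<Rightarrow> 'g::group_add"
  assumes "is_graded UNIV (*) 0 deg"
  shows "semigroup_iso (phi deg) smash_carrier (smash_mult deg)
           (component rees_carrier RZero (rees_deg deg) 0) rees_mult"
  unfolding semigroup_iso_def using bij_betw_phi phi_smash_mult[OF assms] by blast

lemma rees_inverse_iff:
  fixes s :: "'a::{semigroup_mult,mult_zero}"
  assumes "s \<noteq> 0"
  shows "(t \<in> rees_carrier \<and> rees_mult (rees_mult (RE \<alpha> \<beta> s) t) (RE \<alpha> \<beta> s) = RE \<alpha> \<beta> s
            \<and> rees_mult (rees_mult t (RE \<alpha> \<beta> s)) t = t)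
         \<longleftrightarrow> (\<exists>r. t = RE \<beta> \<alpha> r \<and> s * r * s = s \<and> r * s * r = r)"
  (is "?inverse \<longleftrightarrow> _")
proof (cases t)
  case (RE \<gamma> \<delta> r)
  show ?thesis
  proof
    assume ?inverse
    with RE assms have "\<gamma> = \<beta>" "\<delta> = \<alpha>" "s * r * s = s" "r * s * r = r"
      by (auto simp: ee_def split: if_splits)
    with RE show "\<exists>r. t = RE \<beta> \<alpha> r \<and> s * r * s = s \<and> r * s * r = r" by blast
  next
    assume "\<exists>r. t = RE \<beta> \<alpha> r \<and> s * r * s = s \<and> r * s * r = r"
    then obtain r where r: "t = RE \<beta> \<alpha> r" "s * r * s = s" "r * s * r = r" by blast
    from r assms have "s * r \<noteq> 0" by (metis mult_zero_left)
    moreover from r assms have "r * s \<noteq> 0" by (metis mult.assoc mult_zero_right)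
    moreover from \<open>s * r \<noteq> 0\<close> have "r \<noteq> 0" by auto
    ultimately show ?inverse using r assms by simp
  qed
qed simp

lemma ex1_iff_ex1_inj_image:
  assumes "\<And>t. P t \<longleftrightarrow> (\<exists>r. t = f r \<and> Q r)" and "inj f"
  shows "(\<exists>!t. P t) \<longleftrightarrow> (\<exists>!r. Q r)"
  using assms unfolding inj_def by (metis (mono_tags, lifting))

lemma ex1_rees_inverse_iff:
  fixes s :: "'a::{semigroup_mult,mult_zero}"
  assumes "s \<noteq> 0"
  shows "(\<exists>!t. t \<in> rees_carrier \<and> rees_mult (rees_mult (RE \<alpha> \<beta> s) t) (RE \<alpha> \<beta> s) = RE \<alpha> \<beta> s
            \<and> rees_mult (rees_mult t (RE \<alpha> \<beta> s)) t = t)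
         \<longleftrightarrow> (\<exists>!r. s * r * s = s \<and> r * s * r = r)"
  by (rule ex1_iff_ex1_inj_image[OF rees_inverse_iff[OF assms]]) (auto simp: inj_def)

lemma inverse_semigroup_rees_iff:
  "inverse_semigroup (UNIV :: 'a::{semigroup_mult,mult_zero} set) (*)
     \<longleftrightarrow> inverse_semigroup (rees_carrier :: ('g, 'a) rees set) rees_mult"
proof -
  have RZero_unique: "\<exists>!t. t \<in> rees_carrier \<and> rees_mult (rees_mult RZero t) RZero = RZero
                           \<and> rees_mult (rees_mult t RZero) t = (t :: ('g, 'a) rees)"
    by (intro ex1I[of _ RZero]) auto
  have zero_unique: "\<exists>!t :: 'a. s * t * s = s \<and> t * s * t = t" if "s = 0" for s
    using that by (intro ex1I[of _ 0]) auto
  show ?thesis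
    unfolding inverse_semigroup_def
  proof (intro iffI ballI)
    fix x :: "('g, 'a) rees"
    assume inverse_S: "\<forall>s\<in>(UNIV :: 'a set). \<exists>!t. t \<in> UNIV \<and> s * t * s = s \<and> t * s * t = t"
      and "x \<in> rees_carrier"
    show "\<exists>!t. t \<in> rees_carrier \<and> rees_mult (rees_mult x t) x = x \<and> rees_mult (rees_mult t x) t = t"
    proof (cases x)
      case (RE \<alpha> \<beta> s)
      with \<open>x \<in> rees_carrier\<close> have "s \<noteq> 0" by simp
      moreover have "\<exists>!r. s * r * s = s \<and> r * s * r = r"
        using inverse_S by simp
      ultimately show ?thesis unfolding RE by (rule ex1_rees_inverse_iff[THEN iffD2])
    qed (use RZero_unique in simp)
  next
    fix s :: 'a
    assume inverse_R: "\<forall>x\<in>(rees_carrier :: ('g, 'a) rees set). \<exists>!t. t \<in> rees_carrier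
              \<and> rees_mult (rees_mult x t) x = x \<and> rees_mult (rees_mult t x) t = t"
    show "\<exists>!t. t \<in> UNIV \<and> s * t * s = s \<and> t * s * t = t"
    proof (cases "s = 0")
      case False
      then have "RE (undefined :: 'g) undefined s \<in> rees_carrier" by simp
      from bspec[OF inverse_R this] have "\<exists>!r. s * r * s = s \<and> r * s * r = r"
        by (rule ex1_rees_inverse_iff[OF False, THEN iffD1])
      then show ?thesis by simp
    qed (use zero_unique in simp)
  qed
qed

theorem proposition3p7:
  fixes deg :: "'a::{semigroup_mult,mult_zero} \<Rightarrow> 'g::group_add"
  assumes graded: "is_graded (UNIV :: 'a set) (*) 0 deg"
    and lu: "has_local_units (UNIV :: 'a set) (*)"
  shows "idempotents (rees_carrier :: ('g, 'a) rees set) rees_mult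
           = {ee (\<alpha>::'g) \<alpha> u | u \<alpha>. u \<in> idempotents (UNIV :: 'a set) (*)}
    \<and> has_local_units (rees_carrier :: ('g, 'a) rees set) rees_mult
    \<and> strongly_graded (rees_carrier :: ('g, 'a) rees set) rees_mult RZero (rees_deg deg)
    \<and> semigroup_iso (phi deg) smash_carrier (smash_mult deg)
           (component rees_carrier RZero (rees_deg deg) 0) rees_mult
    \<and> (inverse_semigroup (UNIV :: 'a set) (*)
           \<longleftrightarrow> inverse_semigroup (rees_carrier :: ('g, 'a) rees set) rees_mult)"
  using idempotents_rees has_local_units_rees[OF lu] strongly_graded_rees[OF graded lu]
    semigroup_iso_phi[OF graded] inverse_semigroup_rees_iff
  by blast

end
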